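(* Let $n\ge1$, let $\mathbf{v}=(v_1,\dots,v_n)\in\mathbb{R}^n$ with $v_e>0$ for all $e$, let $V_c>0$, and let $\mathbf{w}\in\mathbb{R}^n_+$ (i.e. $\mathbf{w}\ge 0$). Consider the knapsack problem $$(\mathcal{P}_{kp}):\ \min\{P_u(\boldsymbol{\rho})=-\mathbf{w}^T\boldsymbol{\rho}\ :\ \mathbf{v}^T\boldsymbol{\rho}\le V_c,\ \boldsymbol{\rho}\in\{0,1\}^n\},$$ the set $\mathcal{S}_a^+=\{(\boldsymbol{\sigma},\tau)\in\mathbb{R}^n\times\mathbb{R}:\boldsymbol{\sigma}>0,\ \tau\ge 0\}$, and the canonical dual problem $$(\mathcal{P}_u^d):\ \max\Big\{P_u^d(\boldsymbol{\sigma},\tau)=-\sum_{e=1}^n\frac{(\sigma_e+w_e-\tau v_e)^2}{4\sigma_e}-\tau V_c\ :\ (\boldsymbol{\sigma},\tau)\in\mathcal{S}_a^+\Big\}.$$ If $\bar{\boldsymbol{\zeta}}=(\bar{\boldsymbol{\sigma}},\bar\tau)\in\mathcal{S}_a^+$ is a solution to $(\mathcal{P}_u^d)$, then $$\bar{\boldsymbol{\rho}}=\tfrac12[\mathrm{Diag}(\bar{\boldsymbol{\sigma}})]^{-1}(\bar{\boldsymbol{\sigma}}-\bar\tau\mathbf{v}+\mathbf{w})$$ is a unique global optimal solution to $(\mathcal{P}_{kp})$, and $$P_u(\bar{\boldsymbol{\rho}})=\min_{\boldsymbol{\rho}\in\mathcal{Z}_a}P_u(\boldsymbol{\rho})=\max_{\boldsymbol{\zeta}\in\mathcal{S}_a^+}P_u^d(\boldsymbol{\zeta})=P_u^d(\bar{\boldsymbol{\zeta}}),$$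 where $\mathcal{Z}_a=\{\boldsymbol{\rho}\in\{0,1\}^n:\mathbf{v}^T\boldsymbol{\rho}\le V_c\}$.
   Context: Vector inequalities are componentwise; $\boldsymbol{\sigma}>0$ means every component is strictly positive. In the paper $\mathbf{w}=\mathbf{c}(\mathbf{u})$ is the vector of element strain energies for a given displacement $\mathbf{u}$, and $\mathbf{v}$ is the vector of element volumes. *)

theory Defs
  imports "HOL-Analysis.Analysis"
begin

text \<open>Vectors in R^n are modelled as real^'n for a finite index type 'n (so n \<ge> 1).\<close>

definition Pu :: "real^'n \<Rightarrow> real^'n \<Rightarrow> real" where
  "Pu w \<rho> = - (w \<bullet> \<rho>)"

definition Za :: "real^'n \<Rightarrow> real \<Rightarrow> (real^'n) set" where
  "Za v Vc = {\<rho>. (\<forall>e. \<rho>$e \<in> {0,1}) \<and> v \<bullet> \<rho> \<le> Vc}"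

definition Sa :: "((real^'n) \<times> real) set" where
  "Sa = {(\<sigma>, \<tau>). (\<forall>e. \<sigma>$e > 0) \<and> \<tau> \<ge> 0}"

definition Pd :: "real^'n \<Rightarrow> real^'n \<Rightarrow> real \<Rightarrow> (real^'n) \<times> real \<Rightarrow> real" where
  "Pd v w Vc \<zeta> = (case \<zeta> of (\<sigma>, \<tau>) \<Rightarrow>
      - (\<Sum>e\<in>UNIV. (\<sigma>$e + w$e - \<tau> * v$e)^2 / (4 * \<sigma>$e)) - \<tau> * Vc)"

definition rho_bar :: "real^'n \<Rightarrow> real^'n \<Rightarrow> real^'n \<Rightarrow> real \<Rightarrow> real^'n" where
  "rho_bar v w \<sigma> \<tau> = (\<chi> e. (\<sigma>$e - \<tau> * v$e + w$e) / (2 * \<sigma>$e))"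

end

theory Submission imports Defs begin

text \<open>Write \<open>c\<^sub>e = w\<^sub>e - \<tau> v\<^sub>e\<close>. The dual objective splits into the terms
\<open>(\<sigma>\<^sub>e + c\<^sub>e)\<^sup>2 / (4 \<sigma>\<^sub>e)\<close>, each of which dominates \<open>c\<^sub>e \<rho>\<^sub>e\<close> for \<open>\<rho>\<^sub>e \<in> {0,1}\<close>; this gives weak
duality, with a gap that is an explicit sum of nonnegative terms. Optimality in \<open>\<sigma>\<^sub>e\<close> forces
\<open>\<sigma>\<^sub>e = |c\<^sub>e| \<noteq> 0\<close>, so \<open>\<rho>\<close>-bar is the 0/1 indicator of \<open>c\<^sub>e > 0\<close>. Perturbing \<open>\<tau>\<close> (and \<open>\<sigma> = |c|\<close>
along with it) keeps this indicator fixed, and optimality in \<open>\<tau>\<close> then yields primal feasibility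
and complementary slackness, hence a zero gap. Since every \<open>c\<^sub>e \<noteq> 0\<close>, a zero gap pins down each
component of a primal optimum.\<close>

definition dual_term :: "real \<Rightarrow> real \<Rightarrow> real" where
  "dual_term s c = (s + c)\<^sup>2 / (4 * s)"

lemma mult_le_dual_term:
  assumes "s > 0" and "r \<in> {0, 1}"
  shows "c * r \<le> dual_term s c"
proof -
  have "4 * s * (c * r) \<le> (s + c)\<^sup>2"
  proof (cases "r = 0")
    case False
    with assms have "r = 1" by auto
    moreover have "(s + c)\<^sup>2 - 4 * s * c = (s - c)\<^sup>2" by (simp add: power2_eq_square algebra_simps)
    ultimately show ?thesis by (simp add: algebra_simps)
  qed simp
  with assms show ?thesis by (simp add: dual_term_def field_simps)
qed

lemma dual_term_abs:
  assumes "c \<noteq> 0"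
  shows "dual_term \<bar>c\<bar> c = c * (if c > 0 then 1 else 0)"
  using assms by (cases "c > 0") (auto simp: dual_term_def field_simps power2_eq_square)

text \<open>For \<open>c = 0\<close> the infimum \<open>0\<close> of \<open>dual_term t c\<close> over \<open>t > 0\<close> is not attained.\<close>

lemma dual_term_minimal_imp_abs:
  assumes s: "s > 0" and min: "\<And>t. t > 0 \<Longrightarrow> dual_term s c \<le> dual_term t c"
  shows "c \<noteq> 0 \<and> s = \<bar>c\<bar>"
proof (cases "c = 0")
  case True
  with s min[of "s / 2"] show ?thesis by (simp add: dual_term_def power2_eq_square field_simps)
next
  case False
  have "dual_term s c - dual_term \<bar>c\<bar> c = (s - \<bar>c\<bar>)\<^sup>2 / (4 * s)"
    using s False by (cases "c > 0") (auto simp: dual_term_def field_simps power2_eq_square)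
  moreover have "dual_term s c \<le> dual_term \<bar>c\<bar> c" using min False by simp
  ultimately have "(s - \<bar>c\<bar>)\<^sup>2 / (4 * s) \<le> 0" by linarith
  then have "(s - \<bar>c\<bar>)\<^sup>2 \<le> 0" using s by (simp add: divide_le_0_iff)
  with False show ?thesis by simp
qed

lemma Pd_dual_term:
  "Pd v w Vc (s, t) = - (\<Sum>e\<in>UNIV. dual_term (s$e) (w$e - t * v$e)) - t * Vc"
  by (simp add: Pd_def dual_term_def algebra_simps)

lemma Pu_minus_Pd:
  "Pu w \<rho> - Pd v w Vc (s, t) =
    (\<Sum>e\<in>UNIV. dual_term (s$e) (w$e - t * v$e) - (w$e - t * v$e) * \<rho>$e) + t * (Vc - v \<bullet> \<rho>)"
  by (simp add: Pd_dual_term Pu_def inner_vec_def sum_subtractf sum.distrib sum_distrib_left algebra_simps)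

lemma weak_duality:
  assumes "(s, t) \<in> Sa" and "\<rho> \<in> Za v Vc"
  shows "Pd v w Vc (s, t) \<le> Pu w \<rho>"
proof -
  from assms have "0 \<le> (\<Sum>e\<in>UNIV. dual_term (s$e) (w$e - t * v$e) - (w$e - t * v$e) * \<rho>$e)"
    by (intro sum_nonneg) (simp add: mult_le_dual_term Sa_def Za_def)
  moreover from assms have "0 \<le> t * (Vc - v \<bullet> \<rho>)" by (simp add: Sa_def Za_def)
  ultimately show ?thesis using Pu_minus_Pd[of w \<rho> v Vc s t] by linarith
qed

lemma Pd_abs_reduced_weight:
  assumes "\<forall>e. w$e - t * v$e \<noteq> 0"
    and "\<rho> = (\<chi> e. if w$e - t * v$e > 0 then 1 else 0)"
  shows "Pd v w Vc (\<chi> e. \<bar>w$e - t * v$e\<bar>, t) = Pu w \<rho> + t * (v \<bullet> \<rho> - Vc)"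
proof -
  have "Pu w \<rho> - Pd v w Vc (\<chi> e. \<bar>w$e - t * v$e\<bar>, t) = t * (Vc - v \<bullet> \<rho>)"
    using assms by (simp add: Pu_minus_Pd dual_term_abs)
  then show ?thesis by (simp add: algebra_simps)
qed

lemma finite_Za: "finite (Za v Vc)"
proof -
  have "Za v Vc \<subseteq> vec_lambda ` (UNIV \<rightarrow>\<^sub>E {0, 1})"
  proof
    fix \<rho> assume "\<rho> \<in> Za v Vc"
    then have "vec_nth \<rho> \<in> UNIV \<rightarrow>\<^sub>E {0, 1}" by (auto simp: Za_def)
    then show "\<rho> \<in> vec_lambda ` (UNIV \<rightarrow>\<^sub>E {0, 1})" by (metis image_eqI vec_nth_inverse)
  qed
  then show ?thesis by (rule finite_subset) (simp add: finite_PiE)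
qed

lemma sum_le_sum_differing_at:
  fixes f g :: "'a \<Rightarrow> 'b::ordered_ab_group_add"
  assumes "finite A" "e \<in> A" "\<And>i. i \<in> A \<Longrightarrow> i \<noteq> e \<Longrightarrow> f i = g i" "sum f A \<le> sum g A"
  shows "f e \<le> g e"
proof -
  have "sum f (A - {e}) = sum g (A - {e})" using assms(3) by (intro sum.cong) auto
  with assms show ?thesis by (simp add: sum.remove)
qed

lemma sign_preserving_radius:
  fixes a b :: "'a::finite \<Rightarrow> real"
  assumes "\<forall>e. a e \<noteq> 0"
  obtains \<delta> where "\<delta> > 0"
    and "\<And>t e. \<bar>t\<bar> < \<delta> \<Longrightarrow> a e - t * b e \<noteq> 0 \<and> (a e - t * b e > 0 \<longleftrightarrow> a e > 0)"
proof
  let ?\<delta> = "Min (range (\<lambda>e. \<bar>a e\<bar> / (\<bar>b e\<bar> + 1)))"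
  show "?\<delta> > 0" using assms by (simp add: Min_gr_iff)
  fix t e assume t: "\<bar>t\<bar> < ?\<delta>"
  have "\<bar>t * b e\<bar> \<le> \<bar>t\<bar> * (\<bar>b e\<bar> + 1)" by (simp add: abs_mult mult_left_mono)
  also have "\<dots> < ?\<delta> * (\<bar>b e\<bar> + 1)" using t by (intro mult_strict_right_mono) auto
  also have "\<dots> \<le> \<bar>a e\<bar>" by (simp add: pos_le_divide_eq[symmetric])
  finally show "a e - t * b e \<noteq> 0 \<and> (a e - t * b e > 0 \<longleftrightarrow> a e > 0)" by auto
qed

context
  fixes v w \<sigma> :: "real^'n" and Vc \<tau> :: real
  assumes dual_feas: "(\<sigma>, \<tau>) \<in> Sa"
    and dual_opt: "\<forall>\<zeta>\<in>Sa. Pd v w Vc \<zeta> \<le> Pd v w Vc (\<sigma>, \<tau>)"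
begin

lemma sigma_pos: "\<sigma>$e > 0" and tau_nonneg: "\<tau> \<ge> 0"
  using dual_feas by (auto simp: Sa_def)

lemma sigma_eq_abs_reduced_weight:
  "w$e - \<tau> * v$e \<noteq> 0 \<and> \<sigma>$e = \<bar>w$e - \<tau> * v$e\<bar>"
proof (rule dual_term_minimal_imp_abs[OF sigma_pos])
  fix t :: real assume "t > 0"
  define \<sigma>' where "\<sigma>' = (\<chi> i. if i = e then t else \<sigma>$i)"
  have "(\<sigma>', \<tau>) \<in> Sa" using \<open>t > 0\<close> sigma_pos tau_nonneg by (auto simp: Sa_def \<sigma>'_def)
  with dual_opt have "Pd v w Vc (\<sigma>', \<tau>) \<le> Pd v w Vc (\<sigma>, \<tau>)" by blast
  then have "(\<Sum>i\<in>UNIV. dual_term (\<sigma>$i) (w$i - \<tau> * v$i))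
      \<le> (\<Sum>i\<in>UNIV. dual_term (\<sigma>'$i) (w$i - \<tau> * v$i))"
    by (simp add: Pd_dual_term)
  then have "dual_term (\<sigma>$e) (w$e - \<tau> * v$e) \<le> dual_term (\<sigma>'$e) (w$e - \<tau> * v$e)"
    by (rule sum_le_sum_differing_at[rotated 3]) (simp_all add: \<sigma>'_def)
  then show "dual_term (\<sigma>$e) (w$e - \<tau> * v$e) \<le> dual_term t (w$e - \<tau> * v$e)"
    by (simp add: \<sigma>'_def)
qed

lemma rho_bar_indicator:
  "rho_bar v w \<sigma> \<tau> = (\<chi> e. if w$e - \<tau> * v$e > 0 then 1 else 0)"
  using sigma_eq_abs_reduced_weight by (auto simp: vec_eq_iff rho_bar_def)

lemma Pd_dual_opt:
  "Pd v w Vc (\<sigma>, \<tau>) = Pu w (rho_bar v w \<sigma> \<tau>) + \<tau> * (v \<bullet> rho_bar v w \<sigma> \<tau> - Vc)"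
proof -
  have "\<sigma> = (\<chi> e. \<bar>w$e - \<tau> * v$e\<bar>)" using sigma_eq_abs_reduced_weight by (simp add: vec_eq_iff)
  then have "Pd v w Vc (\<sigma>, \<tau>) = Pd v w Vc (\<chi> e. \<bar>w$e - \<tau> * v$e\<bar>, \<tau>)" by simp
  also have "\<dots> = Pu w (rho_bar v w \<sigma> \<tau>) + \<tau> * (v \<bullet> rho_bar v w \<sigma> \<tau> - Vc)"
    using sigma_eq_abs_reduced_weight by (intro Pd_abs_reduced_weight) (simp_all add: rho_bar_indicator)
  finally show ?thesis .
qed

text \<open>Shifting \<open>\<tau>\<close> by a small \<open>t\<close> while resetting \<open>\<sigma>\<close> to the new \<open>|c|\<close> leaves
\<open>\<rho>\<close>-bar unchanged, so the dual objective is affine in \<open>t\<close> near \<open>0\<close>.\<close>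

lemma dual_opt_perturb_tau:
  obtains \<delta> where "\<delta> > 0"
    and "\<And>t. \<bar>t\<bar> < \<delta> \<Longrightarrow> \<tau> + t \<ge> 0 \<Longrightarrow> t * (v \<bullet> rho_bar v w \<sigma> \<tau> - Vc) \<le> 0"
proof -
  let ?\<rho> = "rho_bar v w \<sigma> \<tau>"
  obtain \<delta> where "\<delta> > 0" and sign:
    "\<And>t e. \<bar>t\<bar> < \<delta> \<Longrightarrow> (w$e - \<tau> * v$e) - t * v$e \<noteq> 0
       \<and> ((w$e - \<tau> * v$e) - t * v$e > 0 \<longleftrightarrow> w$e - \<tau> * v$e > 0)"
    using sign_preserving_radius[of "\<lambda>e. w$e - \<tau> * v$e"] sigma_eq_abs_reduced_weight by metis
  show thesis
  proof (rule that[OF \<open>\<delta> > 0\<close>])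
    fix t assume "\<bar>t\<bar> < \<delta>" "\<tau> + t \<ge> 0"
    have shift: "w$e - (\<tau> + t) * v$e = (w$e - \<tau> * v$e) - t * v$e" for e
      by (simp add: algebra_simps)
    have nz: "\<forall>e. w$e - (\<tau> + t) * v$e \<noteq> 0"
      using sign[OF \<open>\<bar>t\<bar> < \<delta>\<close>] by (simp only: shift) blast
    have ind: "?\<rho> = (\<chi> e. if w$e - (\<tau> + t) * v$e > 0 then 1 else 0)"
      using sign[OF \<open>\<bar>t\<bar> < \<delta>\<close>] by (simp only: shift rho_bar_indicator)
    have "(\<chi> e. \<bar>w$e - (\<tau> + t) * v$e\<bar>, \<tau> + t) \<in> Sa"
      using nz \<open>\<tau> + t \<ge> 0\<close> by (simp add: Sa_def)
    with dual_opt have "Pd v w Vc (\<chi> e. \<bar>w$e - (\<tau> + t) * v$e\<bar>, \<tau> + t) \<le> Pd v w Vc (\<sigma>, \<tau>)"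
      by blast
    then have "Pu w ?\<rho> + (\<tau> + t) * (v \<bullet> ?\<rho> - Vc) \<le> Pu w ?\<rho> + \<tau> * (v \<bullet> ?\<rho> - Vc)"
      by (simp only: Pd_abs_reduced_weight[OF nz ind] Pd_dual_opt)
    then show "t * (v \<bullet> ?\<rho> - Vc) \<le> 0" by (simp add: algebra_simps)
  qed
qed

lemma primal_feasible_and_slack:
  "v \<bullet> rho_bar v w \<sigma> \<tau> \<le> Vc \<and> \<tau> * (v \<bullet> rho_bar v w \<sigma> \<tau> - Vc) = 0"
proof -
  obtain \<delta> where "\<delta> > 0"
    and perturb: "\<And>t. \<bar>t\<bar> < \<delta> \<Longrightarrow> \<tau> + t \<ge> 0 \<Longrightarrow> t * (v \<bullet> rho_bar v w \<sigma> \<tau> - Vc) \<le> 0"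
    using dual_opt_perturb_tau by blast
  have "v \<bullet> rho_bar v w \<sigma> \<tau> \<le> Vc"
    using perturb[of "\<delta> / 2"] \<open>\<delta> > 0\<close> tau_nonneg by (simp add: mult_le_0_iff)
  moreover have "v \<bullet> rho_bar v w \<sigma> \<tau> \<ge> Vc" if "\<tau> > 0"
  proof -
    define m where "m = min \<delta> \<tau> / 2"
    have "m > 0" using \<open>\<delta> > 0\<close> that by (simp add: m_def)
    have "- m * (v \<bullet> rho_bar v w \<sigma> \<tau> - Vc) \<le> 0"
      using \<open>\<delta> > 0\<close> that by (intro perturb) (auto simp: m_def)
    with \<open>m > 0\<close> show ?thesis by (simp add: zero_le_mult_iff)
  qed
  ultimately show ?thesis using tau_nonneg by force
qed

lemma rho_bar_Za: "rho_bar v w \<sigma> \<tau> \<in> Za v Vc"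
  using primal_feasible_and_slack by (simp add: rho_bar_indicator Za_def)

lemma strong_duality: "Pd v w Vc (\<sigma>, \<tau>) = Pu w (rho_bar v w \<sigma> \<tau>)"
  using Pd_dual_opt primal_feasible_and_slack by simp

lemma rho_bar_optimal:
  assumes "\<rho> \<in> Za v Vc"
  shows "Pu w (rho_bar v w \<sigma> \<tau>) \<le> Pu w \<rho>"
  using weak_duality[OF dual_feas assms, of w] strong_duality by simp

text \<open>Equal objective values make the duality gap for \<open>\<rho>\<close> vanish; each summand
\<open>dual_term \<sigma>\<^sub>e c\<^sub>e - c\<^sub>e \<rho>\<^sub>e = c\<^sub>e (\<rho>-bar\<^sub>e - \<rho>\<^sub>e)\<close> of it is nonnegative, hence zero, and \<open>c\<^sub>e \<noteq> 0\<close>.\<close>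

lemma rho_bar_unique:
  assumes \<rho>: "\<rho> \<in> Za v Vc" and eq: "Pu w \<rho> = Pu w (rho_bar v w \<sigma> \<tau>)"
  shows "\<rho> = rho_bar v w \<sigma> \<tau>"
proof -
  define gap where "gap e = dual_term (\<sigma>$e) (w$e - \<tau> * v$e) - (w$e - \<tau> * v$e) * \<rho>$e" for e
  have gap_nonneg: "gap e \<ge> 0" for e
    using \<rho> sigma_pos by (simp add: gap_def mult_le_dual_term Za_def)
  have "sum gap UNIV + \<tau> * (Vc - v \<bullet> \<rho>) = 0"
    using Pu_minus_Pd[of w \<rho> v Vc \<sigma> \<tau>] eq strong_duality by (simp add: gap_def)
  moreover have "\<tau> * (Vc - v \<bullet> \<rho>) \<ge> 0" using \<rho> tau_nonneg by (simp add: Za_def)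
  moreover have "sum gap UNIV \<ge> 0" using gap_nonneg by (simp add: sum_nonneg)
  ultimately have "sum gap UNIV = 0" by linarith
  then have "gap e = 0" for e using gap_nonneg by (simp add: sum_nonneg_eq_0_iff)
  moreover have "gap e = (w$e - \<tau> * v$e) * (rho_bar v w \<sigma> \<tau> $ e - \<rho>$e)" for e
    using sigma_eq_abs_reduced_weight[of e]
    by (simp add: gap_def dual_term_abs rho_bar_indicator algebra_simps)
  ultimately show ?thesis
    using sigma_eq_abs_reduced_weight by (simp add: vec_eq_iff)
qed

end

theorem theorem2:
  fixes v w \<sigma> :: "real^'n" and Vc \<tau> :: real
  assumes v_pos: "\<forall>e. v$e > 0"
    and Vc_pos: "Vc > 0"
    and w_nonneg: "\<forall>e. w$e \<ge> 0"
    and dual_feas: "(\<sigma>, \<tau>) \<in> Sa"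
    and dual_opt: "\<forall>\<zeta>\<in>Sa. Pd v w Vc \<zeta> \<le> Pd v w Vc (\<sigma>, \<tau>)"
  shows "rho_bar v w \<sigma> \<tau> \<in> Za v Vc
    \<and> (\<forall>\<rho>\<in>Za v Vc. Pu w (rho_bar v w \<sigma> \<tau>) \<le> Pu w \<rho>)
    \<and> (\<forall>\<rho>\<in>Za v Vc. Pu w \<rho> = Pu w (rho_bar v w \<sigma> \<tau>) \<longrightarrow> \<rho> = rho_bar v w \<sigma> \<tau>)
    \<and> Pu w (rho_bar v w \<sigma> \<tau>) = Min (Pu w ` Za v Vc)
    \<and> Min (Pu w ` Za v Vc) = (SUP \<zeta>\<in>Sa. Pd v w Vc \<zeta>)
    \<and> (SUP \<zeta>\<in>Sa. Pd v w Vc \<zeta>) = Pd v w Vc (\<sigma>, \<tau>)"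
proof (intro conjI ballI impI)
  show feasible: "rho_bar v w \<sigma> \<tau> \<in> Za v Vc"
    by (rule rho_bar_Za[OF dual_feas dual_opt])
  show optimal: "Pu w (rho_bar v w \<sigma> \<tau>) \<le> Pu w \<rho>" if "\<rho> \<in> Za v Vc" for \<rho>
    using rho_bar_optimal[OF dual_feas dual_opt that] .
  show "\<rho> = rho_bar v w \<sigma> \<tau>" if "\<rho> \<in> Za v Vc" "Pu w \<rho> = Pu w (rho_bar v w \<sigma> \<tau>)" for \<rho>
    using rho_bar_unique[OF dual_feas dual_opt that] .
  show primal_min: "Pu w (rho_bar v w \<sigma> \<tau>) = Min (Pu w ` Za v Vc)"
    by (rule sym, rule Min_eqI) (use finite_Za feasible optimal in auto)
  show dual_max: "(SUP \<zeta>\<in>Sa. Pd v w Vc \<zeta>) = Pd v w Vc (\<sigma>, \<tau>)"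
    by (rule cSup_eq_maximum) (use dual_feas dual_opt in auto)
  show "Min (Pu w ` Za v Vc) = (SUP \<zeta>\<in>Sa. Pd v w Vc \<zeta>)"
    using primal_min dual_max strong_duality[OF dual_feas dual_opt] by simp
qed

end
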